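(* One has $\sqrt n\,\|\hat p_n-p_0\|_\infty=O_p(1)$ as $n\to\infty$. Furthermore, if $p_0$ has finite support, then $$\sqrt n\,\|F_{\hat p_n}-F_{p_0}\|_\infty=O_p(1)\quad\text{and}\quad \sqrt n\,\|H_{\hat p_n}-H_{p_0}\|_\infty=O_p(1).$$
   Context: Let $\mathbb N=\{0,1,2,\dots\}$. For a real sequence $p$ and $k\ge1$ let $\Delta p(k)=p(k+1)-2p(k)+p(k-1)$; $p$ is convex if $\Delta p(k)\ge0$ for all $k\ge1$; $\mathcal C$ is the set of convex sequences with $\sum_kp(k)^2<\infty$; $\|p\|_\infty=\sup_k|p(k)|$. For a sequence $p$ define $F_p(k)=\sum_{j=0}^kp(j)$ for $k\in\mathbb N$ (with $F_p(-1)=0$) and $H_p(z)=\sum_{k=0}^{z-1}F_p(k)$ for $z\in\mathbb N$ (with $H_p(0)=0$). Let $p_0$ be a convex probability mass function on $\mathbb N$ whose support is either $\mathbb N$ or $\{0,\dots,S\}$ for some integer $S\ge1$. Let $X_1,X_2,\dots$ be i.i.d. with pmf $p_0$, $p_n(j)=\frac1n\sum_{i=1}^n\mathbb 1\{X_i=j\}$, and let $\hat p_n$ be the unique minimizer over $\mathcal C$ of $\frac12\sum_{j\in\mathbb N}(p_n(j)-p(j))^2$. *)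

theory Defs
  imports "HOL-Probability.Probability"
begin

definition convex_seq :: "(nat \<Rightarrow> real) \<Rightarrow> bool" where
  "convex_seq p \<longleftrightarrow> (\<forall>k\<ge>1. p (k+1) - 2 * p k + p (k-1) \<ge> 0)"

definition convC :: "(nat \<Rightarrow> real) set" where
  "convC = {p. convex_seq p \<and> summable (\<lambda>k. (p k)^2)}"

definition sup_norm :: "(nat \<Rightarrow> real) \<Rightarrow> real" where
  "sup_norm p = (SUP k. \<bar>p k\<bar>)"

definition Fcum :: "(nat \<Rightarrow> real) \<Rightarrow> nat \<Rightarrow> real" where
  "Fcum p k = (\<Sum>j\<le>k. p j)"

definition Hcum :: "(nat \<Rightarrow> real) \<Rightarrow> nat \<Rightarrow> real" where
  "Hcum p z = (\<Sum>k<z. Fcum p k)"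

definition emp_pmf :: "(nat \<Rightarrow> 'a \<Rightarrow> nat) \<Rightarrow> nat \<Rightarrow> 'a \<Rightarrow> nat \<Rightarrow> real" where
  "emp_pmf X n w j = real (card {i\<in>{1..n}. X i w = j}) / real n"

definition ls_crit :: "(nat \<Rightarrow> real) \<Rightarrow> (nat \<Rightarrow> real) \<Rightarrow> real" where
  "ls_crit q p = (1/2) * (\<Sum>j. (q j - p j)^2)"

definition conv_lse :: "(nat \<Rightarrow> real) \<Rightarrow> (nat \<Rightarrow> real)" where
  "conv_lse q = (THE p. p \<in> convC \<and> (\<forall>r\<in>convC. ls_crit q p \<le> ls_crit q r))"

text \<open>Stochastic boundedness O_p(1), stated with inner probability (equivalently outer
  probability of the complement) to avoid measurability issues.\<close>
definition bounded_in_prob :: "'a measure \<Rightarrow> (nat \<Rightarrow> 'a \<Rightarrow> real) \<Rightarrow> bool" where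
  "bounded_in_prob M Y \<longleftrightarrow>
     (\<forall>\<epsilon>>0. \<exists>K N. \<forall>n\<ge>N. \<exists>A\<in>sets M.
        A \<subseteq> {w\<in>space M. \<bar>Y n w\<bar> \<le> K} \<and> measure M A \<ge> 1 - \<epsilon>)"

end

theory Submission
  imports Defs
begin

text \<open>
  The estimator \<open>conv_lse p\<^sub>n\<close> is
  the \<open>\<ell>\<^sup>2\<close>-projection of the empirical pmf \<open>p\<^sub>n\<close> onto the closed convex cone \<open>convC\<close> of
  convex square-summable sequences.

  Since \<open>p\<^sub>0 \<in> convC\<close>, the
  projection is nonexpansive towards \<open>p\<^sub>0\<close>, so \<open>\<parallel>conv_lse p\<^sub>n - p\<^sub>0\<parallel>\<^sub>\<infinity> \<le> \<parallel>p\<^sub>n - p\<^sub>0\<parallel>\<^sub>2\<close>.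
  (2) Probability.  \<open>E \<parallel>p\<^sub>n - p\<^sub>0\<parallel>\<^sub>2\<^sup>2 \<le> 1/n\<close> (binomial variances), so Markov's inequality
  gives \<open>n \<parallel>p\<^sub>n - p\<^sub>0\<parallel>\<^sub>2\<^sup>2 \<le> K\<^sup>2\<close> with probability \<open>\<ge> 1 - 1/K\<^sup>2\<close>; this yields the first claim.
  (3) Finite support \<open>{0..S}\<close>.  Convex \<open>\<ell>\<^sup>2\<close>-sequences are nonnegative and nonincreasing,
  and testing the variational inequality against step perturbations gives Fenchel conditions
  comparing cumulative sums at knots.  Once the sup-norm error is below \<open>p\<^sub>0 S / 3\<close>, the
  estimator has a knot at \<open>S + 1\<close> and is itself a pmf supported on \<open>{0..S+1}\<close>; the errors of
  \<open>F\<close> and \<open>H\<close> are then at most \<open>(S+1)\<close> resp. \<open>(S+1)\<^sup>2\<close> times the \<open>\<ell>\<^sup>2\<close>-error, and the second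
  claim follows on the same high-probability event for large \<open>n\<close>.
\<close>

definition l2 :: "(nat \<Rightarrow> real) \<Rightarrow> bool" where
  "l2 p \<longleftrightarrow> summable (\<lambda>k. (p k)^2)"

lemma l2_prod:
  assumes "l2 p" "l2 r" shows "summable (\<lambda>k. p k * r k)"
proof (rule summable_comparison_test[where g="\<lambda>k. (p k)^2 + (r k)^2"])
  have "\<bar>p k * r k\<bar> \<le> (p k)^2 + (r k)^2" for k
  proof -
    have "2 * \<bar>p k\<bar> * \<bar>r k\<bar> \<le> (p k)^2 + (r k)^2"
      using sum_squares_bound[of "\<bar>p k\<bar>" "\<bar>r k\<bar>"] by simp
    moreover have "0 \<le> \<bar>p k\<bar> * \<bar>r k\<bar>" by simp
    ultimately show ?thesis unfolding abs_mult by linarith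
  qed
  thus "\<exists>N. \<forall>n\<ge>N. norm (p n * r n) \<le> (p n)^2 + (r n)^2" by auto
  show "summable (\<lambda>k. (p k)^2 + (r k)^2)" using assms unfolding l2_def by (rule summable_add)
qed

lemma l2_diff:
  assumes "l2 p" "l2 r" shows "l2 (\<lambda>k. p k - r k)"
proof -
  have "summable (\<lambda>k. (p k)^2 - 2 * (p k * r k) + (r k)^2)"
    using assms l2_prod[OF assms] unfolding l2_def
    by (intro summable_add summable_diff summable_mult) auto
  thus ?thesis unfolding l2_def by (simp add: power2_diff algebra_simps)
qed

lemma l2_add:
  assumes "l2 p" "l2 r" shows "l2 (\<lambda>k. p k + r k)"
proof -
  have "summable (\<lambda>k. (p k)^2 + 2 * (p k * r k) + (r k)^2)"
    using assms l2_prod[OF assms] unfolding l2_def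
    by (intro summable_add summable_mult) auto
  thus ?thesis unfolding l2_def by (simp add: power2_sum algebra_simps)
qed

lemma l2_scale:
  assumes "l2 p" shows "l2 (\<lambda>k. c * p k)"
  using summable_mult[OF assms[unfolded l2_def], of "c^2"]
  unfolding l2_def by (simp add: power_mult_distrib)

lemma l2_finite_support:
  assumes "\<And>k. k > m \<Longrightarrow> p k = 0" shows "l2 p"
  unfolding l2_def
  by (rule sums_summable[OF sums_finite[of "{..m}"]]) (use assms in auto)

lemma l2_term_le:
  assumes "l2 p" shows "(p k)^2 \<le> (\<Sum>j. (p j)^2)"
  using sum_le_suminf[of "\<lambda>j. (p j)^2" "{k}"] assms unfolding l2_def by auto

lemma l2_dist_summable:
  "l2 q \<Longrightarrow> l2 r \<Longrightarrow> summable (\<lambda>k. (q k - r k)^2)"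
  using l2_diff unfolding l2_def by blast

lemma ls_crit_nonneg: "l2 q \<Longrightarrow> l2 r \<Longrightarrow> ls_crit q r \<ge> 0"
  unfolding ls_crit_def using l2_dist_summable by (simp add: suminf_nonneg)

lemma suminf_lincomb3:
  fixes a b c :: "nat \<Rightarrow> real"
  assumes "summable a" "summable b" "summable c"
  shows "(\<Sum>k. x * a k + y * b k - z * c k) = x * suminf a + y * suminf b - z * suminf c"
proof -
  have "(\<lambda>k. x * a k + y * b k - z * c k) sums (x * suminf a + y * suminf b - z * suminf c)"
    using assms by (intro sums_add sums_diff sums_mult summable_sums)
  thus ?thesis by (rule sums_unique[symmetric])
qed

lemma convC_iff: "p \<in> convC \<longleftrightarrow> convex_seq p \<and> l2 p"
  unfolding convC_def l2_def by auto

lemma convex_seq_D: "convex_seq p \<Longrightarrow> k \<ge> 1 \<Longrightarrow> p (k+1) - 2 * p k + p (k-1) \<ge> 0"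
  unfolding convex_seq_def by blast

lemma convex_seq_comb:
  assumes "convex_seq p" "convex_seq r" "a \<ge> 0" "b \<ge> 0"
  shows "convex_seq (\<lambda>k. a * p k + b * r k)"
  unfolding convex_seq_def
proof (intro allI impI)
  fix k :: nat assume k: "k \<ge> 1"
  have "a * (p (k+1) - 2 * p k + p (k-1)) + b * (r (k+1) - 2 * r k + r (k-1)) \<ge> 0"
    using assms convex_seq_D[OF assms(1) k] convex_seq_D[OF assms(2) k] by simp
  thus "(a * p (k+1) + b * r (k+1)) - 2 * (a * p k + b * r k) + (a * p (k-1) + b * r (k-1)) \<ge> 0"
    by (simp add: algebra_simps)
qed

lemma convC_comb:
  assumes "p \<in> convC" "r \<in> convC" "a \<ge> 0" "b \<ge> 0"
  shows "(\<lambda>k. a * p k + b * r k) \<in> convC"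
  using assms convex_seq_comb[of p r a b] l2_add[OF l2_scale l2_scale, of p r a b]
  by (simp add: convC_iff)

lemma convex_seq_limit:
  assumes "\<And>j. convex_seq (P j)" and "\<And>k. (\<lambda>j. P j k) \<longlonglongrightarrow> p k"
  shows "convex_seq p"
  unfolding convex_seq_def
proof (intro allI impI)
  fix k :: nat assume k: "k \<ge> 1"
  have "(\<lambda>j. P j (k+1) - 2 * P j k + P j (k-1)) \<longlonglongrightarrow> p (k+1) - 2 * p k + p (k-1)"
    by (intro tendsto_intros assms(2))
  moreover have "\<forall>j. 0 \<le> P j (k+1) - 2 * P j k + P j (k-1)"
    using convex_seq_D[OF assms(1) k] by blast
  ultimately show "0 \<le> p (k+1) - 2 * p k + p (k-1)"
    by (intro LIMSEQ_le_const) auto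
qed

text \<open>Fatou's lemma for the criterion: under pointwise convergence the limit is in \<open>\<ell>\<^sup>2\<close>
  and its criterion is at most the limit of the bounds.\<close>
lemma ls_crit_limit_le:
  assumes q: "l2 q" and P: "\<And>j. l2 (P j)" and lim: "\<And>k. (\<lambda>j. P j k) \<longlonglongrightarrow> p k"
    and bound: "\<And>j. ls_crit q (P j) \<le> b j" and b: "b \<longlonglongrightarrow> c"
  shows "l2 p" "ls_crit q p \<le> c"
proof -
  have partial: "(\<Sum>k<N. (q k - p k)^2) \<le> 2 * c" for N
  proof (rule LIMSEQ_le)
    show "(\<lambda>j. \<Sum>k<N. (q k - P j k)^2) \<longlonglongrightarrow> (\<Sum>k<N. (q k - p k)^2)"
      by (intro tendsto_intros lim)
    show "(\<lambda>j. 2 * b j) \<longlonglongrightarrow> 2 * c" by (intro tendsto_intros b)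
    show "\<exists>M. \<forall>j\<ge>M. (\<Sum>k<N. (q k - P j k)^2) \<le> 2 * b j"
    proof (intro exI allI impI)
      fix j
      have "(\<Sum>k<N. (q k - P j k)^2) \<le> (\<Sum>k. (q k - P j k)^2)"
        using l2_dist_summable[OF q P] by (intro sum_le_suminf) auto
      also have "\<dots> = 2 * ls_crit q (P j)" unfolding ls_crit_def by simp
      finally show "(\<Sum>k<N. (q k - P j k)^2) \<le> 2 * b j" using bound[of j] by linarith
    qed
  qed
  have sq: "summable (\<lambda>k. (q k - p k)^2)"
    by (rule summableI_nonneg_bounded[OF _ partial]) simp
  from l2_diff[OF q sq[folded l2_def]] show "l2 p" by simp
  show "ls_crit q p \<le> c"
    unfolding ls_crit_def using suminf_le_const[OF sq partial] by simp
qed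

text \<open>Parallelogram law: two elements of \<open>convC\<close> whose criteria are close to the infimum
  \<open>c\<close> are close to each other in \<open>\<ell>\<^sup>2\<close> (their midpoint lies in \<open>convC\<close> as well).\<close>
lemma near_minimizers_close:
  assumes q: "l2 q" and lower: "\<And>s. s \<in> convC \<Longrightarrow> c \<le> ls_crit q s"
    and p: "p \<in> convC" and r: "r \<in> convC"
  shows "(\<Sum>k. (p k - r k)^2) \<le> 4 * (ls_crit q p - c) + 4 * (ls_crit q r - c)"
proof -
  define m where "m = (\<lambda>k. (1/2) * p k + (1/2) * r k)"
  have mC: "m \<in> convC" unfolding m_def using p r by (intro convC_comb) auto
  have l2s: "l2 p" "l2 r" "l2 m" using p r mC by (auto simp: convC_iff)
  have parallelogram: "(\<lambda>k. (p k - r k)^2)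
      = (\<lambda>k. 2 * (q k - p k)^2 + 2 * (q k - r k)^2 - 4 * (q k - m k)^2)"
    by (rule ext) (simp add: m_def power2_eq_square algebra_simps)
  have "(\<Sum>k. (p k - r k)^2) = 4 * ls_crit q p + 4 * ls_crit q r - 8 * ls_crit q m"
    unfolding parallelogram ls_crit_def
    by (subst suminf_lincomb3) (use l2_dist_summable q l2s in auto)
  thus ?thesis using lower[OF mC] by (simp add: algebra_simps)
qed

lemma coordinatewise_convergent:
  fixes P :: "nat \<Rightarrow> nat \<Rightarrow> real"
  assumes close: "\<And>i j. (P i k - P j k)^2 \<le> e i + e j" and e: "e \<longlonglongrightarrow> 0"
  shows "convergent (\<lambda>j. P j k)"
proof -
  have "Cauchy (\<lambda>j. P j k)"
  proof (rule metric_CauchyI)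
    fix \<epsilon> :: real assume "\<epsilon> > 0"
    hence "\<epsilon>^2 / 2 > 0" by simp
    from LIMSEQ_D[OF e this] obtain N where N: "\<And>n. n \<ge> N \<Longrightarrow> \<bar>e n\<bar> < \<epsilon>^2 / 2"
      by auto
    have "dist (P i k) (P j k) < \<epsilon>" if "i \<ge> N" "j \<ge> N" for i j
    proof -
      have "(P i k - P j k)^2 < \<epsilon>^2" using close[of i j] N[OF that(1)] N[OF that(2)] by linarith
      hence "\<bar>P i k - P j k\<bar> < \<epsilon>" using \<open>\<epsilon> > 0\<close> by (metis abs_le_square_iff abs_of_pos not_le)
      thus ?thesis by (simp add: dist_real_def)
    qed
    thus "\<exists>N. \<forall>i\<ge>N. \<forall>j\<ge>N. dist (P i k) (P j k) < \<epsilon>" by blast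
  qed
  thus ?thesis by (simp add: Cauchy_convergent_iff)
qed

text \<open>Existence of the projection: a minimizing sequence is Cauchy in every coordinate, and its
  pointwise limit is convex, square-summable and attains the infimum.\<close>
lemma projection_exists:
  assumes q: "l2 q"
  shows "\<exists>p\<in>convC. \<forall>r\<in>convC. ls_crit q p \<le> ls_crit q r"
proof -
  define c where "c = Inf (ls_crit q ` convC)"
  have zero: "(\<lambda>_. 0) \<in> convC" unfolding convC_def convex_seq_def by simp
  have bdd: "bdd_below (ls_crit q ` convC)"
    by (rule bdd_belowI[of _ 0]) (use ls_crit_nonneg q in \<open>auto simp: convC_iff\<close>)
  have lower: "\<And>r. r \<in> convC \<Longrightarrow> c \<le> ls_crit q r"
    unfolding c_def using bdd by (intro cInf_lower) auto
  have "\<exists>p\<in>convC. ls_crit q p < c + 1 / (real j + 1)" for j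
    using cInf_lessD[of "ls_crit q ` convC" "c + 1 / (real j + 1)"] zero unfolding c_def by auto
  then obtain P where P: "\<And>j. P j \<in> convC" "\<And>j. ls_crit q (P j) < c + 1 / (real j + 1)"
    by metis
  have Pl2: "\<And>j. l2 (P j)" using P(1) by (simp add: convC_iff)
  have inv: "(\<lambda>j. 1 / (real j + 1)) \<longlonglongrightarrow> 0"
    using LIMSEQ_inverse_real_of_nat by (simp add: inverse_eq_divide add.commute)
  have close: "(P i k - P j k)^2 \<le> 4 / (real i + 1) + 4 / (real j + 1)" for i j k
  proof -
    have "(P i k - P j k)^2 \<le> (\<Sum>k. (P i k - P j k)^2)"
      using l2_term_le[OF l2_diff[OF Pl2 Pl2]] by blast
    also have "\<dots> \<le> 4 * (ls_crit q (P i) - c) + 4 * (ls_crit q (P j) - c)"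
      by (rule near_minimizers_close[OF q lower P(1) P(1)])
    also have "\<dots> \<le> 4 / (real i + 1) + 4 / (real j + 1)" using P(2)[of i] P(2)[of j] by simp
    finally show ?thesis .
  qed
  define p where "p = (\<lambda>k. lim (\<lambda>j. P j k))"
  have lim: "(\<lambda>j. P j k) \<longlonglongrightarrow> p k" for k
  proof -
    have "(\<lambda>j. 4 * (1 / (real j + 1))) \<longlonglongrightarrow> 4 * 0" by (intro tendsto_intros inv)
    hence "convergent (\<lambda>j. P j k)" using close by (intro coordinatewise_convergent) auto
    thus ?thesis unfolding p_def by (simp add: convergent_LIMSEQ_iff)
  qed
  have "convex_seq p" by (rule convex_seq_limit[OF _ lim]) (use P(1) in \<open>simp add: convC_iff\<close>)
  moreover have "(\<lambda>j. c + 1 / (real j + 1)) \<longlonglongrightarrow> c + 0" by (intro tendsto_intros inv)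
  note limit = ls_crit_limit_le[OF q Pl2 lim less_imp_le[OF P(2)] this[simplified]]
  ultimately have "p \<in> convC" by (simp add: convC_iff)
  thus ?thesis using limit(2) lower by force
qed

lemma projection_variational_ineq:
  assumes q: "l2 q" and pC: "p \<in> convC" and pmin: "\<forall>r\<in>convC. ls_crit q p \<le> ls_crit q r"
    and rC: "r \<in> convC"
  shows "(\<Sum>k. (q k - p k) * (r k - p k)) \<le> 0"
proof -
  have pl: "l2 p" and rl: "l2 r" using pC rC by (auto simp: convC_iff)
  define A where "A = (\<Sum>k. (q k - p k)^2)"
  define B where "B = (\<Sum>k. (q k - p k) * (r k - p k))"
  define D where "D = (\<Sum>k. (r k - p k)^2)"
  have sA: "summable (\<lambda>k. (q k - p k)^2)" using l2_dist_summable q pl by blast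
  have sD: "summable (\<lambda>k. (r k - p k)^2)" using l2_dist_summable rl pl by blast
  have sB: "summable (\<lambda>k. (q k - p k) * (r k - p k))" using l2_prod l2_diff q pl rl by blast
  have D0: "D \<ge> 0" unfolding D_def using sD by (simp add: suminf_nonneg)
  \<comment> \<open>moving from \<open>p\<close> towards \<open>r\<close> by a step \<open>t\<close> does not decrease the criterion\<close>
  have step: "2 * t * B \<le> t^2 * D" if t: "0 < t" "t \<le> 1" for t
  proof -
    define pt where "pt = (\<lambda>k. (1 - t) * p k + t * r k)"
    have ptC: "pt \<in> convC" unfolding pt_def using pC rC t by (intro convC_comb) auto
    have expand: "(\<lambda>k. (q k - pt k)^2) = (\<lambda>k. 1 * (q k - p k)^2 + (t^2) * (r k - p k)^2
        - (2*t) * ((q k - p k) * (r k - p k)))"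
      by (rule ext) (simp add: pt_def power2_eq_square algebra_simps)
    have "ls_crit q pt = (1/2) * (A + t^2 * D - 2 * t * B)"
      unfolding ls_crit_def expand A_def B_def D_def by (subst suminf_lincomb3[OF sA sD sB]) simp
    moreover have "ls_crit q p = (1/2) * A" unfolding ls_crit_def A_def by simp
    ultimately show ?thesis using pmin ptC by force
  qed
  show ?thesis
  proof (rule ccontr)
    assume "\<not> ?thesis"
    hence Bp: "B > 0" unfolding B_def by simp
    define t where "t = min 1 (B / (D + 1))"
    have t0: "0 < t" "t \<le> 1" unfolding t_def using Bp D0 by auto
    have "2 * B \<le> t * D" using step[OF t0] t0 by (simp add: power2_eq_square mult.assoc)
    moreover have "t * D \<le> (B / (D + 1)) * D" unfolding t_def using D0 by (intro mult_right_mono) auto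
    moreover have "(B / (D + 1)) * D < B" using Bp D0 by (simp add: field_simps)
    ultimately show False using Bp by linarith
  qed
qed

text \<open>Uniqueness follows from the variational inequality, so \<open>conv_lse\<close> (a definite
  description) is the projection.\<close>
lemma conv_lse_minimizes:
  assumes q: "l2 q"
  shows "conv_lse q \<in> convC" "\<forall>r\<in>convC. ls_crit q (conv_lse q) \<le> ls_crit q r"
proof -
  have unique: "p1 = p2" if "p1 \<in> convC" "\<forall>r\<in>convC. ls_crit q p1 \<le> ls_crit q r"
     "p2 \<in> convC" "\<forall>r\<in>convC. ls_crit q p2 \<le> ls_crit q r" for p1 p2
  proof -
    have l1: "l2 p1" and l2': "l2 p2" using that by (auto simp: convC_iff)
    have s1: "summable (\<lambda>k. (q k - p1 k) * (p2 k - p1 k))" using l2_prod l2_diff q l1 l2' by blast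
    have s2: "summable (\<lambda>k. (q k - p2 k) * (p1 k - p2 k))" using l2_prod l2_diff q l1 l2' by blast
    have split: "(\<lambda>k. (p1 k - p2 k)^2)
        = (\<lambda>k. (q k - p1 k) * (p2 k - p1 k) + (q k - p2 k) * (p1 k - p2 k))"
      by (rule ext) (simp add: power2_eq_square algebra_simps)
    have "(\<Sum>k. (p1 k - p2 k)^2) \<le> 0"
      unfolding split
      using suminf_add[OF s1 s2] projection_variational_ineq[OF q that(1,2,3)]
        projection_variational_ineq[OF q that(3,4,1)]
      by linarith
    hence "(p1 k - p2 k)^2 \<le> 0" for k using l2_term_le[OF l2_diff[OF l1 l2'], of k] by linarith
    hence "p1 k = p2 k" for k by (metis power2_less_eq_zero_iff diff_eq_eq add_0)
    thus ?thesis by auto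
  qed
  have "\<exists>!p. p \<in> convC \<and> (\<forall>r\<in>convC. ls_crit q p \<le> ls_crit q r)"
    using projection_exists[OF q] unique by blast
  from theI'[OF this] show "conv_lse q \<in> convC" "\<forall>r\<in>convC. ls_crit q (conv_lse q) \<le> ls_crit q r"
    unfolding conv_lse_def by auto
qed

lemma conv_lse_variational_ineq:
  assumes q: "l2 q" and rC: "r \<in> convC"
  shows "(\<Sum>k. (q k - conv_lse q k) * (r k - conv_lse q k)) \<le> 0"
  using projection_variational_ineq[OF q conv_lse_minimizes[OF q] rC] .

lemma conv_lse_contraction:
  assumes q: "l2 q" and p0C: "p0 \<in> convC"
  shows "(\<Sum>k. (conv_lse q k - p0 k)^2) \<le> (\<Sum>k. (q k - p0 k)^2)"
proof -
  define p where "p = conv_lse q"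
  have pl: "l2 p" unfolding p_def using conv_lse_minimizes[OF q] by (simp add: convC_iff)
  have p0l: "l2 p0" using p0C by (simp add: convC_iff)
  have s1: "summable (\<lambda>k. (q k - p k) * (p0 k - p k))" using l2_prod l2_diff q pl p0l by blast
  have s2: "summable (\<lambda>k. (q k - p0 k)^2)" using l2_dist_summable q p0l by blast
  have s3: "summable (\<lambda>k. (p k - p0 k)^2)" using l2_dist_summable pl p0l by blast
  have pointwise: "(p k - p0 k)^2 \<le> (1/2) * (q k - p0 k)^2 + (1/2) * (p k - p0 k)^2
      + (q k - p k) * (p0 k - p k)" for k
  proof -
    have "0 \<le> ((q k - p0 k) - (p k - p0 k))^2" by simp
    thus ?thesis by (simp add: power2_eq_square algebra_simps)
  qed
  have "(\<Sum>k. (p k - p0 k)^2) \<le> (\<Sum>k. (1/2) * (q k - p0 k)^2 + (1/2) * (p k - p0 k)^2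
      + (q k - p k) * (p0 k - p k))"
    using s1 s2 s3 pointwise by (intro suminf_le) (auto intro!: summable_add summable_mult)
  also have "\<dots> = (1/2) * (\<Sum>k. (q k - p0 k)^2) + (1/2) * (\<Sum>k. (p k - p0 k)^2)
      + (\<Sum>k. (q k - p k) * (p0 k - p k))"
  proof -
    have "(\<lambda>k. (1/2) * (q k - p0 k)^2 + (1/2) * (p k - p0 k)^2 + (q k - p k) * (p0 k - p k)) sums
      ((1/2) * (\<Sum>k. (q k - p0 k)^2) + (1/2) * (\<Sum>k. (p k - p0 k)^2) + (\<Sum>k. (q k - p k) * (p0 k - p k)))"
      using s1 s2 s3 by (intro sums_add sums_mult summable_sums)
    thus ?thesis by (simp add: sums_iff)
  qed
  finally show ?thesis using conv_lse_variational_ineq[OF q p0C] unfolding p_def by linarith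
qed

lemma conv_lse_coord_bound:
  assumes q: "l2 q" and p0C: "p0 \<in> convC"
  shows "\<bar>conv_lse q k - p0 k\<bar> \<le> sqrt (\<Sum>k. (q k - p0 k)^2)"
proof -
  have "l2 (conv_lse q)" "l2 p0" using conv_lse_minimizes[OF q] p0C by (auto simp: convC_iff)
  hence "(conv_lse q k - p0 k)^2 \<le> (\<Sum>k. (conv_lse q k - p0 k)^2)"
    by (intro l2_term_le l2_diff)
  also have "\<dots> \<le> (\<Sum>k. (q k - p0 k)^2)" by (rule conv_lse_contraction[OF q p0C])
  finally show ?thesis by (simp add: real_le_rsqrt)
qed

text \<open>Shape of convex square-summable sequences: they tend to zero, hence are nonincreasing
  and nonnegative.\<close>
lemma convC_tendsto_zero:
  assumes "p \<in> convC" shows "p \<longlonglongrightarrow> 0"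
proof -
  have "(\<lambda>k. (p k)^2) \<longlonglongrightarrow> 0" using assms unfolding convC_iff l2_def
    by (intro summable_LIMSEQ_zero) auto
  hence "(\<lambda>k. sqrt ((p k)^2)) \<longlonglongrightarrow> sqrt 0" by (intro tendsto_real_sqrt)
  thus ?thesis by (simp add: tendsto_rabs_zero_iff)
qed

lemma convex_seq_increments_mono:
  assumes "convex_seq p" shows "p (Suc j) - p j \<le> p (Suc (j + m)) - p (j + m)"
proof (induction m)
  case (Suc m) thus ?case using convex_seq_D[OF assms, of "Suc (j + m)"] by simp
qed simp

lemma convC_decreasing:
  assumes pC: "p \<in> convC" shows "p (Suc j) \<le> p j"
proof (rule ccontr)
  assume "\<not> ?thesis"
  hence d: "p (Suc j) - p j > 0" by simp
  have cv: "convex_seq p" using pC by (simp add: convC_iff)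
  have grow: "p (j + m) \<ge> p j + m * (p (Suc j) - p j)" for m
  proof (induction m)
    case (Suc m)
    thus ?case using convex_seq_increments_mono[OF cv, of j m] by (simp add: algebra_simps)
  qed simp
  obtain N where N: "\<And>n. n \<ge> N \<Longrightarrow> \<bar>p n\<bar> < 1"
    using LIMSEQ_D[OF convC_tendsto_zero[OF pC], of 1] by auto
  obtain m :: nat where m: "(1 - p j) / (p (Suc j) - p j) < real m" "N \<le> m"
    using reals_Archimedean2 by (metis max.cobounded1 max.cobounded2 of_nat_le_iff order_less_le_trans)
  have "1 - p j < m * (p (Suc j) - p j)" using m(1) d by (simp add: field_simps)
  hence "p (j + m) > 1" using grow[of m] by linarith
  thus False using N[of "j + m"] m(2) by simp
qed

lemma convC_nonneg:
  assumes pC: "p \<in> convC" shows "p k \<ge> 0"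
proof -
  have "decseq p" by (rule decseq_SucI) (use convC_decreasing[OF pC] in blast)
  from decseq_ge[OF this convC_tendsto_zero[OF pC]] show ?thesis .
qed

text \<open>A positive element of \<open>convC\<close> has a knot (strictly positive second difference)
  beyond every point where it is positive; otherwise it would be linear from there on.\<close>
lemma convC_knot_beyond:
  assumes pC: "p \<in> convC" and pk: "p k > 0"
  shows "\<exists>z>k. p (z+1) - 2 * p z + p (z-1) > 0"
proof (rule ccontr)
  assume "\<not> ?thesis"
  hence flat: "\<And>z. z > k \<Longrightarrow> p (z+1) - 2 * p z + p (z-1) \<le> 0" by auto
  have cv: "convex_seq p" using pC by (simp add: convC_iff)
  define d where "d = p (Suc k) - p k"
  have increments: "p (Suc (k + m)) - p (k + m) = d" for m
  proof (induction m)
    case (Suc m)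
    thus ?case using flat[of "Suc (k + m)"] convex_seq_D[OF cv, of "Suc (k + m)"] by simp
  qed (simp add: d_def)
  have linear: "p (k + m) = p k + m * d" for m
  proof (induction m)
    case (Suc m) thus ?case using increments[of m] by (simp add: algebra_simps)
  qed simp
  have "d \<le> 0" using convC_decreasing[OF pC, of k] unfolding d_def by simp
  show False
  proof (cases "d = 0")
    case True
    have "(\<lambda>m. p (k + m)) \<longlonglongrightarrow> 0"
      using LIMSEQ_ignore_initial_segment[OF convC_tendsto_zero[OF pC], of k] by (simp add: add.commute)
    hence "p k = 0" using linear True by (simp add: LIMSEQ_const_iff)
    thus False using pk by simp
  next
    case False
    hence dn: "d < 0" using \<open>d \<le> 0\<close> by simp
    obtain m :: nat where "p k / (- d) < real m" using reals_Archimedean2 by blast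
    hence "p (k + m) < 0" using linear[of m] dn by (simp add: field_simps)
    thus False using convC_nonneg[OF pC] by (metis not_le)
  qed
qed

definition step_le :: "nat \<Rightarrow> nat \<Rightarrow> real" where
  "step_le m k = (if k \<le> m then 1 else 0)"

lemma step_le_second_diff:
  assumes "k \<ge> 1"
  shows "step_le m (k+1) - 2 * step_le m k + step_le m (k-1)
    = (if k = m then -1 else if k = m+1 then 1 else 0)"
  using assms unfolding step_le_def by auto

lemma step_perturbation_convC:
  assumes pC: "p \<in> convC"
    and ok: "\<And>k. k \<ge> 1 \<Longrightarrow>
      0 \<le> (p (k+1) - 2 * p k + p (k-1)) + c * (if k = m then -1 else if k = m+1 then 1 else 0)"
  shows "(\<lambda>k. p k + c * step_le m k) \<in> convC"
proof -
  have "l2 (step_le m)" by (rule l2_finite_support[of m]) (auto simp: step_le_def)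
  hence "l2 (\<lambda>k. p k + c * step_le m k)" using pC by (intro l2_add l2_scale) (auto simp: convC_iff)
  moreover have "convex_seq (\<lambda>k. p k + c * step_le m k)"
    unfolding convex_seq_def
  proof (intro allI impI)
    fix k :: nat assume k: "k \<ge> 1"
    have "(p (k+1) + c * step_le m (k+1)) - 2 * (p k + c * step_le m k) + (p (k-1) + c * step_le m (k-1))
        = (p (k+1) - 2 * p k + p (k-1)) + c * (step_le m (k+1) - 2 * step_le m k + step_le m (k-1))"
      by (simp add: algebra_simps)
    thus "0 \<le> (p (k+1) + c * step_le m (k+1)) - 2 * (p k + c * step_le m k) + (p (k-1) + c * step_le m (k-1))"
      using ok[OF k] step_le_second_diff[OF k] by simp
  qed
  ultimately show ?thesis by (simp add: convC_iff)
qed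

lemma conv_lse_step_perturbation:
  assumes q: "l2 q" and rC: "(\<lambda>k. conv_lse q k + c * step_le m k) \<in> convC"
  shows "c * (Fcum q m - Fcum (conv_lse q) m) \<le> 0"
proof -
  define p where "p = conv_lse q"
  have "(\<lambda>k. (q k - p k) * ((p k + c * step_le m k) - p k))
      sums (\<Sum>k\<in>{..m}. (q k - p k) * ((p k + c * step_le m k) - p k))"
    by (rule sums_finite) (auto simp: step_le_def)
  moreover have "(\<Sum>k\<in>{..m}. (q k - p k) * ((p k + c * step_le m k) - p k)) = c * (Fcum q m - Fcum p m)"
    unfolding Fcum_def by (simp add: step_le_def sum_distrib_left sum_subtractf algebra_simps)
  ultimately show ?thesis using conv_lse_variational_ineq[OF q rC] unfolding p_def by (simp add: sums_iff)
qed

text \<open>Fenchel conditions at a knot \<open>z\<close> of the estimator \<open>p = conv_lse q\<close>: perturbing in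
  either direction is admissible, giving \<open>F\<^sub>p(z-1) \<le> F\<^sub>q(z-1)\<close> and \<open>F\<^sub>q(z) \<le> F\<^sub>p(z)\<close>.\<close>
lemma conv_lse_cdf_le_before_knot:
  assumes q: "l2 q" and z: "z \<ge> 1"
    and knot: "conv_lse q (z+1) - 2 * conv_lse q z + conv_lse q (z-1) > 0"
  shows "Fcum (conv_lse q) (z-1) \<le> Fcum q (z-1)"
proof -
  define p where "p = conv_lse q"
  define e where "e = p (z+1) - 2 * p z + p (z-1)"
  have pC: "p \<in> convC" unfolding p_def using conv_lse_minimizes[OF q] by blast
  have "(\<lambda>k. p k + (-e) * step_le (z-1) k) \<in> convC"
  proof (rule step_perturbation_convC[OF pC])
    fix k :: nat assume k: "k \<ge> 1"
    thus "0 \<le> (p (k+1) - 2 * p k + p (k-1)) + (-e) * (if k = z-1 then -1 else if k = z-1+1 then 1 else 0)"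
      using convex_seq_D[of p k] pC knot z unfolding e_def p_def by (auto simp: convC_iff)
  qed
  hence "(-e) * (Fcum q (z-1) - Fcum p (z-1)) \<le> 0"
    using conv_lse_step_perturbation[OF q] unfolding p_def by blast
  moreover have "e > 0" using knot unfolding e_def p_def .
  ultimately show ?thesis unfolding p_def by (simp add: zero_le_mult_iff)
qed

lemma conv_lse_cdf_ge_at_knot:
  assumes q: "l2 q" and z: "z \<ge> 1"
    and knot: "conv_lse q (z+1) - 2 * conv_lse q z + conv_lse q (z-1) > 0"
  shows "Fcum q z \<le> Fcum (conv_lse q) z"
proof -
  define p where "p = conv_lse q"
  define e where "e = p (z+1) - 2 * p z + p (z-1)"
  have pC: "p \<in> convC" unfolding p_def using conv_lse_minimizes[OF q] by blast
  have "(\<lambda>k. p k + e * step_le z k) \<in> convC"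
  proof (rule step_perturbation_convC[OF pC])
    fix k :: nat assume k: "k \<ge> 1"
    thus "0 \<le> (p (k+1) - 2 * p k + p (k-1)) + e * (if k = z then -1 else if k = z+1 then 1 else 0)"
      using convex_seq_D[of p k] pC knot z unfolding e_def p_def by (auto simp: convC_iff)
  qed
  hence "e * (Fcum q z - Fcum p z) \<le> 0"
    using conv_lse_step_perturbation[OF q] unfolding p_def by blast
  moreover have "e > 0" using knot unfolding e_def p_def .
  ultimately show ?thesis unfolding p_def by (simp add: mult_le_0_iff)
qed

lemma Fcum_Suc: "Fcum f (Suc k) = Fcum f k + f (Suc k)"
  unfolding Fcum_def by simp

lemma Fcum_split:
  assumes "a \<le> b" shows "Fcum f b = Fcum f a + (\<Sum>j\<in>{a<..b}. f j)"
  using assms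
proof (induction b rule: dec_induct)
  case (step n)
  have "{a<..Suc n} = insert (Suc n) {a<..n}" using step by auto
  thus ?case using step by (simp add: Fcum_Suc)
qed simp

lemma Fcum_const_beyond:
  assumes "\<forall>k>S. f k = 0" "k \<ge> S" shows "Fcum f k = Fcum f S"
  using Fcum_split[OF assms(2), of f] assms(1) by simp

lemma conv_lse_knot_after_support:
  assumes q: "l2 q" and p0S: "\<forall>k>S. p0 k = 0" and gap: "3 * \<delta> < p0 S"
    and close: "\<And>k. \<bar>conv_lse q k - p0 k\<bar> \<le> \<delta>"
  shows "conv_lse q (S+1+1) - 2 * conv_lse q (S+1) + conv_lse q (S+1-1) > 0"
proof -
  define p where "p = conv_lse q"
  have pC: "p \<in> convC" unfolding p_def using conv_lse_minimizes[OF q] by blast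
  have "p (S+1) \<le> \<delta>" "p S \<ge> p0 S - \<delta>"
    using close[of "S+1"] close[of S] p0S unfolding p_def by auto
  moreover have "p (S+2) \<ge> 0" by (rule convC_nonneg[OF pC])
  ultimately show ?thesis using gap unfolding p_def by (simp add: numeral_2_eq_2)
qed

lemma conv_lse_finite_support:
  assumes q: "l2 q" and qF: "\<And>k. k \<ge> S \<Longrightarrow> Fcum q k = 1"
    and knot: "conv_lse q (S+1+1) - 2 * conv_lse q (S+1) + conv_lse q (S+1-1) > 0"
  shows "Fcum (conv_lse q) (S+1) \<ge> 1" "\<And>k. k \<ge> S+2 \<Longrightarrow> conv_lse q k = 0"
proof -
  define p where "p = conv_lse q"
  have pC: "p \<in> convC" unfolding p_def using conv_lse_minimizes[OF q] by blast
  show ge1: "Fcum (conv_lse q) (S+1) \<ge> 1"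
    using conv_lse_cdf_ge_at_knot[OF q _ knot] qF[of "S+1"] by simp
  show "conv_lse q k = 0" if k: "k \<ge> S+2" for k
  proof (rule ccontr)
    assume "conv_lse q k \<noteq> 0"
    hence pk: "p k > 0" using convC_nonneg[OF pC, of k] unfolding p_def by simp
    obtain z where z: "z > k" "p (z+1) - 2 * p z + p (z-1) > 0"
      using convC_knot_beyond[OF pC pk] by blast
    have "Fcum p (z-1) \<le> 1"
      using conv_lse_cdf_le_before_knot[OF q _ z(2)[unfolded p_def]] qF[of "z-1"] z k
      unfolding p_def by simp
    moreover have "Fcum p (z-1) = Fcum p (S+1) + (\<Sum>j\<in>{S+1<..z-1}. p j)"
      by (rule Fcum_split) (use z k in simp)
    moreover have "p k \<le> (\<Sum>j\<in>{S+1<..z-1}. p j)"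
      by (rule member_le_sum) (use z k convC_nonneg[OF pC] in auto)
    ultimately show False using ge1 pk unfolding p_def by linarith
  qed
qed

lemma conv_lse_total_mass:
  assumes q: "l2 q" and qF: "\<And>k. k \<ge> S \<Longrightarrow> Fcum q k = 1"
    and knot: "conv_lse q (S+1+1) - 2 * conv_lse q (S+1) + conv_lse q (S+1-1) > 0"
  shows "\<And>k. k \<ge> S+1 \<Longrightarrow> Fcum (conv_lse q) k = 1"
proof -
  define p where "p = conv_lse q"
  have pC: "p \<in> convC" unfolding p_def using conv_lse_minimizes[OF q] by blast
  note support = conv_lse_finite_support[OF q qF knot, folded p_def]
  have le1: "Fcum p (S+1) \<le> 1"
  proof (cases "p (S+1) = 0")
    case True
    have "Fcum p S \<le> 1"
      using conv_lse_cdf_le_before_knot[OF q _ knot] qF[of S] unfolding p_def by simp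
    thus ?thesis using True by (simp add: Fcum_Suc)
  next
    case False
    hence "p (S+2+1) - 2 * p (S+2) + p (S+2-1) > 0"
      using convC_nonneg[OF pC, of "S+1"] support(2)[of "S+2"] support(2)[of "S+3"]
      by (simp add: numeral_3_eq_3 numeral_2_eq_2)
    thus ?thesis
      using conv_lse_cdf_le_before_knot[OF q, of "S+2"] qF[of "S+1"] unfolding p_def by simp
  qed
  show "Fcum (conv_lse q) k = 1" if "k \<ge> S+1" for k
    using Fcum_const_beyond[of "S+1" p k] support le1 that unfolding p_def by force
qed

lemma cdf_error_bounds:
  assumes close: "\<And>k. \<bar>p k - p0 k\<bar> \<le> \<delta>"
    and Fp: "\<And>k. k \<ge> S+1 \<Longrightarrow> Fcum p k = 1" and Fp0: "\<And>k. k \<ge> S \<Longrightarrow> Fcum p0 k = 1"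
  shows "\<bar>Fcum p k - Fcum p0 k\<bar> \<le> (real S + 1) * \<delta>"
    and "\<bar>Hcum p z - Hcum p0 z\<bar> \<le> (real S + 1)^2 * \<delta>"
proof -
  have d0: "\<delta> \<ge> 0" using close[of 0] by linarith
  have Fb: "\<bar>Fcum p k - Fcum p0 k\<bar> \<le> (real S + 1) * \<delta>" for k
  proof (cases "k \<le> S")
    case True
    have "\<bar>Fcum p k - Fcum p0 k\<bar> \<le> (\<Sum>j\<le>k. \<bar>p j - p0 j\<bar>)"
      unfolding Fcum_def sum_subtractf[symmetric] by (rule sum_abs)
    also have "\<dots> \<le> (real k + 1) * \<delta>" using sum_bounded_above[of "{..k}" "\<lambda>j. \<bar>p j - p0 j\<bar>" \<delta>] close by (simp add: add.commute)
    also have "\<dots> \<le> (real S + 1) * \<delta>" using True d0 by (intro mult_right_mono) auto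
    finally show ?thesis .
  qed (use Fp Fp0 d0 in simp)
  thus "\<bar>Fcum p k - Fcum p0 k\<bar> \<le> (real S + 1) * \<delta>" .
  \<comment> \<open>only the first \<open>S + 1\<close> increments of \<open>Hcum\<close> can differ\<close>
  have Hb: "\<bar>Hcum p z - Hcum p0 z\<bar> \<le> real (min z (S+1)) * ((real S + 1) * \<delta>)" for z
  proof (induction z)
    case (Suc z)
    have "Hcum p (Suc z) - Hcum p0 (Suc z) = (Hcum p z - Hcum p0 z) + (Fcum p z - Fcum p0 z)"
      unfolding Hcum_def by simp
    moreover have "z \<ge> S+1 \<Longrightarrow> Fcum p z - Fcum p0 z = 0" using Fp Fp0 by simp
    ultimately show ?case using Suc Fb[of z] by (cases "z \<le> S") (auto simp: algebra_simps)
  qed (simp add: Hcum_def)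
  have "real (min z (S+1)) * ((real S + 1) * \<delta>) \<le> (real S + 1) * ((real S + 1) * \<delta>)"
    using d0 by (intro mult_right_mono) auto
  from order_trans[OF Hb[of z] this] show "\<bar>Hcum p z - Hcum p0 z\<bar> \<le> (real S + 1)^2 * \<delta>"
    by (simp only: power2_eq_square mult.assoc)
qed

lemma conv_lse_cdf_error:
  fixes q p0 :: "nat \<Rightarrow> real"
  defines "\<delta> \<equiv> sqrt (\<Sum>k. (q k - p0 k)^2)"
  assumes q: "l2 q" and p0C: "p0 \<in> convC" and p0S: "\<forall>k>S. p0 k = 0"
    and qF: "\<And>k. k \<ge> S \<Longrightarrow> Fcum q k = 1" and p0F: "\<And>k. k \<ge> S \<Longrightarrow> Fcum p0 k = 1"
    and gap: "3 * \<delta> < p0 S"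
  shows "\<bar>Fcum (conv_lse q) k - Fcum p0 k\<bar> \<le> (real S + 1) * \<delta>"
    and "\<bar>Hcum (conv_lse q) z - Hcum p0 z\<bar> \<le> (real S + 1)^2 * \<delta>"
proof -
  have close: "\<And>k. \<bar>conv_lse q k - p0 k\<bar> \<le> \<delta>"
    unfolding \<delta>_def by (rule conv_lse_coord_bound[OF q p0C])
  note knot = conv_lse_knot_after_support[OF q p0S gap close]
  note bounds = cdf_error_bounds[OF close conv_lse_total_mass[OF q qF knot] p0F]
  show "\<bar>Fcum (conv_lse q) k - Fcum p0 k\<bar> \<le> (real S + 1) * \<delta>" by (rule bounds(1))
  show "\<bar>Hcum (conv_lse q) z - Hcum p0 z\<bar> \<le> (real S + 1)^2 * \<delta>" by (rule bounds(2))
qed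

lemma sup_norm_bounds:
  assumes "\<And>k. \<bar>f k\<bar> \<le> B"
  shows "0 \<le> sup_norm f" "sup_norm f \<le> B"
proof -
  have "bdd_above (range (\<lambda>k. \<bar>f k\<bar>))" using assms by (intro bdd_aboveI2) auto
  hence "\<bar>f 0\<bar> \<le> sup_norm f" unfolding sup_norm_def by (intro cSUP_upper) auto
  thus "0 \<le> sup_norm f" by linarith
  show "sup_norm f \<le> B" unfolding sup_norm_def using assms by (intro cSUP_least) auto
qed

lemma bounded_in_probI:
  assumes "\<And>K. K > 0 \<Longrightarrow> \<exists>N. \<forall>n\<ge>N. \<exists>A\<in>sets M. A \<subseteq> space M \<and> 1 - 1 / K^2 \<le> measure M A
      \<and> (\<forall>w\<in>A. \<bar>Y n w\<bar> \<le> C * K)"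
  shows "bounded_in_prob M Y"
  unfolding bounded_in_prob_def
proof (intro allI impI)
  fix \<epsilon> :: real assume "\<epsilon> > 0"
  define K where "K = sqrt (1 / \<epsilon>)"
  have K: "K > 0" "1 / K^2 = \<epsilon>" unfolding K_def using \<open>\<epsilon> > 0\<close> by auto
  from assms[OF K(1)] obtain N where N: "\<forall>n\<ge>N. \<exists>A\<in>sets M. A \<subseteq> space M \<and> 1 - \<epsilon> \<le> measure M A
      \<and> (\<forall>w\<in>A. \<bar>Y n w\<bar> \<le> C * K)"
    unfolding K(2) by blast
  show "\<exists>K N. \<forall>n\<ge>N. \<exists>A\<in>sets M. A \<subseteq> {w\<in>space M. \<bar>Y n w\<bar> \<le> K} \<and> 1 - \<epsilon> \<le> measure M A"
  proof (intro exI allI impI)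
    fix n assume "N \<le> n"
    with N obtain A where "A \<in> sets M" "A \<subseteq> space M" "1 - \<epsilon> \<le> measure M A"
      "\<forall>w\<in>A. \<bar>Y n w\<bar> \<le> C * K"
      by blast
    thus "\<exists>A\<in>sets M. A \<subseteq> {w\<in>space M. \<bar>Y n w\<bar> \<le> C * K} \<and> 1 - \<epsilon> \<le> measure M A" by blast
  qed
qed

lemma sqrt_scaling_bound:
  assumes "real n * D \<le> K^2" "D \<ge> 0" "K > 0"
  shows "sqrt (real n) * sqrt D \<le> K"
proof -
  have "sqrt (real n) * sqrt D = sqrt (real n * D)" by (simp add: real_sqrt_mult)
  also have "\<dots> \<le> sqrt (K^2)" using assms by (intro real_sqrt_le_mono) auto
  finally show ?thesis using assms by simp
qed

lemma scaled_sup_norm_bound: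
  assumes f: "\<And>k. \<bar>f k\<bar> \<le> c * sqrt D" and c: "c \<ge> 0"
    and nD: "real n * D \<le> K^2" and D: "D \<ge> 0" and K: "K > 0"
  shows "\<bar>sqrt (real n) * sup_norm f\<bar> \<le> c * K"
proof -
  note sup = sup_norm_bounds[OF f]
  have "\<bar>sqrt (real n) * sup_norm f\<bar> = sqrt (real n) * sup_norm f" using sup(1) by simp
  also have "\<dots> \<le> sqrt (real n) * (c * sqrt D)" using sup(2) by (intro mult_left_mono) auto
  also have "\<dots> = c * (sqrt (real n) * sqrt D)" by simp
  also have "\<dots> \<le> c * K" using sqrt_scaling_bound[OF nD D K] c by (intro mult_left_mono)
  finally show ?thesis .
qed

lemma gap_for_large_n:
  assumes n: "real n > (3 * K / a)^2" and a: "a > 0" and nD: "real n * D \<le> K^2"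
    and D: "D \<ge> 0" and K: "K > 0"
  shows "3 * sqrt D < a"
proof -
  have "3 * K / a < sqrt (real n)" using n by (simp add: real_less_rsqrt)
  hence "3 * K < a * sqrt (real n)" using a by (simp add: field_simps)
  moreover have "3 * (sqrt (real n) * sqrt D) \<le> 3 * K" using sqrt_scaling_bound[OF nD D K] by simp
  ultimately have "sqrt (real n) * (3 * sqrt D) < sqrt (real n) * a" by (simp add: algebra_simps)
  moreover have "0 < real n" using n by (meson le_less_trans zero_le_power2)
  ultimately show ?thesis by (simp add: mult_less_cancel_left_pos)
qed

locale iid_sample = prob_space M for M :: "'a measure" +
  fixes X :: "nat \<Rightarrow> 'a \<Rightarrow> nat" and p0 :: "nat \<Rightarrow> real"
  assumes X_meas[measurable]: "\<And>i. X i \<in> measurable M (count_space UNIV)"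
    and X_indep: "indep_vars (\<lambda>_. count_space UNIV) X UNIV"
    and X_dist: "\<And>i j. measure M {w\<in>space M. X i w = j} = p0 j"
    and p0_sum: "p0 sums 1"
begin

lemma p0_nonneg: "p0 j \<ge> 0"
  using X_dist[of 0 j, symmetric] by simp

lemma p0_le_1: "p0 j \<le> 1"
proof -
  have "sum p0 {j} \<le> suminf p0"
    using p0_nonneg p0_sum by (intro sum_le_suminf) (auto simp: sums_iff)
  thus ?thesis using p0_sum by (simp add: sums_iff)
qed

lemma p0_l2: "l2 p0"
  unfolding l2_def
proof (rule summable_comparison_test[where g=p0])
  show "\<exists>N. \<forall>n\<ge>N. norm ((p0 n)^2) \<le> p0 n"
    using p0_nonneg p0_le_1 by (auto simp: power2_eq_square intro!: mult_left_le)
  show "summable p0" using p0_sum by (simp add: sums_iff)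
qed

definition ind :: "nat \<Rightarrow> nat \<Rightarrow> 'a \<Rightarrow> real" where
  "ind i j w = (if X i w = j then 1 else 0)"

lemma ind_meas[measurable]: "ind i j \<in> borel_measurable M"
  unfolding ind_def by measurable

lemma ind_integrable[simp]: "integrable M (ind i j)"
  by (rule integrable_const_bound[where B=1]) (auto simp: ind_def)

lemma ind_prod_integrable[simp]: "integrable M (\<lambda>w. ind i j w * ind i' j w)"
  by (rule integrable_const_bound[where B=1]) (auto simp: ind_def)

lemma expectation_ind: "expectation (ind i j) = p0 j"
proof -
  have "expectation (ind i j) = expectation (indicator {w\<in>space M. X i w = j})"
    by (rule Bochner_Integration.integral_cong) (auto simp: ind_def indicator_def)
  thus ?thesis using X_dist by simp
qed

text \<open>Second moments of the indicators; independence enters only here.\<close>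
lemma expectation_ind_prod:
  "expectation (\<lambda>w. ind i j w * ind i' j w) = (if i = i' then p0 j else (p0 j)^2)"
proof (cases "i = i'")
  case True
  have "expectation (\<lambda>w. ind i j w * ind i j w) = expectation (ind i j)"
    by (rule Bochner_Integration.integral_cong) (auto simp: ind_def)
  thus ?thesis using True expectation_ind by simp
next
  case False
  have "expectation (\<lambda>w. ind i j w * ind i' j w)
      = expectation (indicator (\<Inter>k\<in>{i,i'}. X k -` {j} \<inter> space M))"
    by (rule Bochner_Integration.integral_cong) (auto simp: ind_def indicator_def)
  also have "\<dots> = prob (\<Inter>k\<in>{i,i'}. X k -` {j} \<inter> space M)"
    by (simp add: Int_absorb2 sets.Int_space_eq2)
  also have "\<dots> = (\<Prod>k\<in>{i,i'}. prob (X k -` {j} \<inter> space M))"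
    using X_indep by (intro indep_varsD) auto
  also have "\<dots> = (p0 j)^2"
  proof -
    have "\<And>k. prob (X k -` {j} \<inter> space M) = p0 j"
      using X_dist by (simp add: vimage_def Int_def conj_commute)
    thus ?thesis using False by (simp add: power2_eq_square)
  qed
  finally show ?thesis using False by simp
qed

lemma emp_pmf_eq: "emp_pmf X n w j = (\<Sum>i\<in>{1..n}. ind i j w) / real n"
proof -
  have "real (card {i\<in>{1..n}. X i w = j}) = (\<Sum>i\<in>{1..n}. ind i j w)"
    by (simp add: ind_def sum.If_cases Int_def conj_commute)
  thus ?thesis unfolding emp_pmf_def by simp
qed

lemma emp_pmf_meas[measurable]: "(\<lambda>w. emp_pmf X n w j) \<in> borel_measurable M"
  unfolding emp_pmf_eq by measurable

lemma emp_pmf_range: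
  assumes "n \<ge> 1" shows "0 \<le> emp_pmf X n w j" "emp_pmf X n w j \<le> 1"
proof -
  have "card {i\<in>{1..n}. X i w = j} \<le> card {1..n}" by (rule card_mono) auto
  thus "0 \<le> emp_pmf X n w j" "emp_pmf X n w j \<le> 1"
    using assms unfolding emp_pmf_def by (auto simp: field_simps)
qed

lemma emp_pmf_l2: "l2 (emp_pmf X n w)"
proof (rule l2_finite_support)
  fix k assume k: "k > Max (insert 0 ((\<lambda>i. X i w) ` {1..n}))"
  have "X i w < k" if "i \<in> {1..n}" for i
    using Max_ge[of "insert 0 ((\<lambda>i. X i w) ` {1..n})" "X i w"] that k by auto
  hence "{i\<in>{1..n}. X i w = k} = {}" by auto
  thus "emp_pmf X n w k = 0" unfolding emp_pmf_def by simp
qed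

lemma emp_pmf_mse:
  assumes n: "n \<ge> 1"
  shows "expectation (\<lambda>w. (emp_pmf X n w j - p0 j)^2) = p0 j * (1 - p0 j) / real n"
proof -
  define p where "p = p0 j"
  define Sn where "Sn = (\<lambda>w. \<Sum>i\<in>{1..n}. ind i j w)"
  have Sn_sq: "(\<lambda>w. (Sn w)^2) = (\<lambda>w. \<Sum>i\<in>{1..n}. \<Sum>i'\<in>{1..n}. ind i j w * ind i' j w)"
    unfolding Sn_def by (rule ext) (simp add: power2_eq_square sum_product)
  have Sn_int: "integrable M Sn" "integrable M (\<lambda>w. (Sn w)^2)"
    unfolding Sn_sq unfolding Sn_def by (auto intro!: Bochner_Integration.integrable_sum)
  have ESn: "expectation Sn = real n * p"
    unfolding Sn_def p_def by (simp add: Bochner_Integration.integral_sum expectation_ind)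
  have inner: "(\<Sum>i'\<in>{1..n}. expectation (\<lambda>w. ind i j w * ind i' j w)) = p + (real n - 1) * p^2"
    if "i \<in> {1..n}" for i
  proof -
    have "(\<Sum>i'\<in>{1..n}. expectation (\<lambda>w. ind i j w * ind i' j w))
        = (\<Sum>i'\<in>{1..n}. p^2 + (if i' = i then p - p^2 else 0))"
      by (rule sum.cong) (auto simp: expectation_ind_prod p_def)
    also have "\<dots> = real n * p^2 + (p - p^2)" using that by (simp add: sum.distrib)
    finally show ?thesis by (simp add: algebra_simps)
  qed
  have ESn_sq: "expectation (\<lambda>w. (Sn w)^2) = real n * (p + (real n - 1) * p^2)"
  proof -
    have "expectation (\<lambda>w. (Sn w)^2)
        = (\<Sum>i\<in>{1..n}. \<Sum>i'\<in>{1..n}. expectation (\<lambda>w. ind i j w * ind i' j w))"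
      unfolding Sn_sq by (simp add: Bochner_Integration.integral_sum)
    also have "\<dots> = (\<Sum>i\<in>{1..n}. p + (real n - 1) * p^2)" by (rule sum.cong[OF refl inner])
    finally show ?thesis by simp
  qed
  have expand: "(\<lambda>w. (emp_pmf X n w j - p0 j)^2)
      = (\<lambda>w. (1 / (real n)^2) * (Sn w)^2 - (2 * p / real n) * Sn w + p^2)"
    by (rule ext) (simp add: emp_pmf_eq Sn_def p_def power2_diff power_divide field_simps)
  have "expectation (\<lambda>w. (emp_pmf X n w j - p0 j)^2) =
      (1 / (real n)^2) * expectation (\<lambda>w. (Sn w)^2) - (2 * p / real n) * expectation Sn + p^2"
    unfolding expand using Sn_int by (simp add: prob_space)
  also have "\<dots> = p * (1 - p) / real n"
    unfolding ESn ESn_sq using n by (simp add: field_simps power2_eq_square)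
  finally show ?thesis unfolding p_def .
qed

end

context iid_sample
begin

definition sq_error :: "nat \<Rightarrow> 'a \<Rightarrow> real" where
  "sq_error n w = (\<Sum>j. (emp_pmf X n w j - p0 j)^2)"

lemma sq_error_meas[measurable]: "sq_error n \<in> borel_measurable M"
  unfolding sq_error_def by measurable

lemma sq_error_summable: "summable (\<lambda>j. (emp_pmf X n w j - p0 j)^2)"
  using l2_dist_summable[OF emp_pmf_l2 p0_l2] .

lemma sq_error_nonneg: "sq_error n w \<ge> 0"
  unfolding sq_error_def using sq_error_summable by (simp add: suminf_nonneg)

lemma sq_error_expectation:
  assumes n: "n \<ge> 1"
  shows "(\<integral>\<^sup>+w. ennreal (sq_error n w) \<partial>M) \<le> ennreal (1 / real n)"
proof -
  have mse: "(\<integral>\<^sup>+w. ennreal ((emp_pmf X n w j - p0 j)^2) \<partial>M) = ennreal (p0 j * (1 - p0 j) / real n)"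
    for j
  proof -
    have "\<bar>emp_pmf X n w j - p0 j\<bar> \<le> 1" for w
      using emp_pmf_range[OF n, of w j] p0_nonneg[of j] p0_le_1[of j] by (auto simp: abs_le_iff)
    hence "\<bar>(emp_pmf X n w j - p0 j)^2\<bar> \<le> 1" for w by (simp add: abs_square_le_1)
    hence "integrable M (\<lambda>w. (emp_pmf X n w j - p0 j)^2)"
      by (intro integrable_const_bound[where B=1]) auto
    from nn_integral_eq_integral[OF this] show ?thesis using emp_pmf_mse[OF n] by simp
  qed
  have "(\<integral>\<^sup>+w. ennreal (sq_error n w) \<partial>M) = (\<integral>\<^sup>+w. (\<Sum>j. ennreal ((emp_pmf X n w j - p0 j)^2)) \<partial>M)"
    unfolding sq_error_def by (rule nn_integral_cong) (simp add: suminf_ennreal2 sq_error_summable)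
  also have "\<dots> = (\<Sum>j. (\<integral>\<^sup>+w. ennreal ((emp_pmf X n w j - p0 j)^2) \<partial>M))"
    by (rule nn_integral_suminf) measurable
  also have "\<dots> = (\<Sum>j. ennreal (p0 j * (1 - p0 j) / real n))" by (simp only: mse)
  also have "\<dots> \<le> (\<Sum>j. ennreal (p0 j / real n))"
    using p0_nonneg n by (intro suminf_le summableI ennreal_leI divide_right_mono) (auto simp: mult_left_le)
  also have "\<dots> = ennreal (\<Sum>j. p0 j / real n)"
    using p0_nonneg p0_sum by (intro suminf_ennreal2) (auto simp: sums_iff intro: summable_divide)
  also have "(\<Sum>j. p0 j / real n) = 1 / real n"
    using p0_sum by (simp add: sums_iff suminf_divide)
  finally show ?thesis .
qed

lemma sq_error_tail:
  assumes n: "n \<ge> 1" and K: "K > 0"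
  shows "prob {w\<in>space M. real n * sq_error n w \<le> K^2} \<ge> 1 - 1 / K^2"
proof -
  define B where "B = {w\<in>space M. K^2 < real n * sq_error n w}"
  define c where "c = ennreal (real n / K^2)"
  have B_sub: "B \<subseteq> {w\<in>space M. 1 \<le> c * ennreal (sq_error n w)}"
  proof
    fix w assume "w \<in> B"
    hence w: "w \<in> space M" "1 \<le> real n / K^2 * sq_error n w" using K unfolding B_def by (auto simp: field_simps)
    have "ennreal 1 \<le> ennreal (real n / K^2 * sq_error n w)" using w(2) by (rule ennreal_leI)
    also have "\<dots> = c * ennreal (sq_error n w)" unfolding c_def by (rule ennreal_mult''[OF sq_error_nonneg])
    finally show "w \<in> {w\<in>space M. 1 \<le> c * ennreal (sq_error n w)}" using w by simp
  qed
  have "emeasure M B \<le> emeasure M {w\<in>space M. 1 \<le> c * ennreal (sq_error n w)}"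
    by (rule emeasure_mono[OF B_sub]) measurable
  also have "\<dots> \<le> c * (\<integral>\<^sup>+w. ennreal (sq_error n w) * indicator (space M) w \<partial>M)"
    using nn_integral_Markov_inequality[of "\<lambda>w. ennreal (sq_error n w)" "space M" M c] by simp
  also have "(\<integral>\<^sup>+w. ennreal (sq_error n w) * indicator (space M) w \<partial>M) = (\<integral>\<^sup>+w. ennreal (sq_error n w) \<partial>M)"
    by (rule nn_integral_cong) (simp add: indicator_def)
  also have "c * \<dots> \<le> c * ennreal (1 / real n)" by (intro mult_left_mono sq_error_expectation[OF n]) simp
  also have "\<dots> = ennreal (1 / K^2)" unfolding c_def using n K
    by (simp add: ennreal_mult[symmetric] field_simps)
  finally have "prob B \<le> 1 / K^2" using K by (simp add: emeasure_eq_measure)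
  moreover have "{w\<in>space M. real n * sq_error n w \<le> K^2} = space M - B" unfolding B_def by auto
  moreover have "B \<in> events" unfolding B_def by measurable
  ultimately show ?thesis using prob_compl by simp
qed

lemma sample_in_support:
  assumes "\<forall>k>S. p0 k = 0"
  shows "AE w in M. \<forall>i\<in>{1..n}. X i w \<le> S"
proof -
  have "AE w in M. X i w \<le> S" for i
  proof (rule AE_I')
    define N where "N j = {w\<in>space M. S < j \<and> X i w = j}" for j
    have "emeasure M (N j) = 0" for j
      using X_dist[of i j] assms unfolding N_def by (cases "S < j") (auto simp: emeasure_eq_measure)
    moreover have "range N \<subseteq> sets M" unfolding N_def by auto
    ultimately have "emeasure M (\<Union>j. N j) = 0" by (intro emeasure_UN_eq_0) auto
    moreover have "(\<Union>j. N j) \<in> sets M" using \<open>range N \<subseteq> sets M\<close> by auto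
    ultimately show "(\<Union>j. N j) \<in> null_sets M" by auto
    show "{w\<in>space M. \<not> X i w \<le> S} \<subseteq> (\<Union>j. N j)" unfolding N_def by auto
  qed
  thus ?thesis by (intro eventually_ball_finite) auto
qed

lemma emp_pmf_support:
  assumes "\<forall>i\<in>{1..n}. X i w \<le> S" "n \<ge> 1"
  shows "\<forall>k>S. emp_pmf X n w k = 0" "\<And>k. k \<ge> S \<Longrightarrow> Fcum (emp_pmf X n w) k = 1"
proof -
  have "{i\<in>{1..n}. X i w = k} = {}" if "k > S" for k
    using assms(1) that by force
  thus vanish: "\<forall>k>S. emp_pmf X n w k = 0" by (simp add: emp_pmf_def)
  have "Fcum (emp_pmf X n w) S = (\<Sum>i\<in>{1..n}. \<Sum>j\<le>S. ind i j w) / real n"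
    unfolding Fcum_def emp_pmf_eq sum_divide_distrib[symmetric] by (subst sum.swap) simp
  also have "\<dots> = (\<Sum>i\<in>{1..n}. 1) / real n"
    using assms(1) by (intro arg_cong2[where f="(/)"] sum.cong) (auto simp: ind_def sum.delta')
  finally have "Fcum (emp_pmf X n w) S = 1" using assms(2) by simp
  thus "Fcum (emp_pmf X n w) k = 1" if "k \<ge> S" for k
    using Fcum_const_beyond[OF vanish that] by simp
qed

text \<open>First claim: \<open>\<surd>n \<parallel>conv_lse p\<^sub>n - p\<^sub>0\<parallel>\<^sub>\<infinity> = O\<^sub>p(1)\<close>, from the contraction
  property and Markov's inequality.\<close>
lemma conv_lse_sup_error_bounded:
  assumes p0C: "p0 \<in> convC"
  shows "bounded_in_prob M (\<lambda>n w. sqrt (real n) * sup_norm (\<lambda>k. conv_lse (emp_pmf X n w) k - p0 k))"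
proof (rule bounded_in_probI[where C=1])
  fix K :: real assume K: "K > 0"
  have "\<exists>A\<in>sets M. A \<subseteq> space M \<and> 1 - 1 / K^2 \<le> measure M A \<and>
      (\<forall>w\<in>A. \<bar>sqrt (real n) * sup_norm (\<lambda>k. conv_lse (emp_pmf X n w) k - p0 k)\<bar> \<le> 1 * K)"
    if n: "n \<ge> 1" for n
  proof (intro bexI conjI ballI)
    define A where "A = {w\<in>space M. real n * sq_error n w \<le> K^2}"
    show "A \<in> sets M" "A \<subseteq> space M" unfolding A_def by auto
    show "1 - 1 / K^2 \<le> measure M A" unfolding A_def by (rule sq_error_tail[OF n K])
    fix w assume "w \<in> A"
    thus "\<bar>sqrt (real n) * sup_norm (\<lambda>k. conv_lse (emp_pmf X n w) k - p0 k)\<bar> \<le> 1 * K"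
      using conv_lse_coord_bound[OF emp_pmf_l2 p0C] sq_error_nonneg K unfolding A_def sq_error_def
      by (intro scaled_sup_norm_bound) auto
  qed
  thus "\<exists>N. \<forall>n\<ge>N. \<exists>A\<in>sets M. A \<subseteq> space M \<and> 1 - 1 / K^2 \<le> measure M A \<and>
      (\<forall>w\<in>A. \<bar>sqrt (real n) * sup_norm (\<lambda>k. conv_lse (emp_pmf X n w) k - p0 k)\<bar> \<le> 1 * K)"
    by blast
qed

lemma p0_cdf_one:
  assumes "\<forall>k>S. p0 k = 0" and "k \<ge> S"
  shows "Fcum p0 k = 1"
proof -
  have "p0 sums (\<Sum>j\<le>S. p0 j)" by (rule sums_finite) (use assms in auto)
  hence "Fcum p0 S = 1" using sums_unique2[OF _ p0_sum] unfolding Fcum_def by simp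
  thus ?thesis using Fcum_const_beyond[OF assms] by simp
qed

lemma sample_in_support_event:
  assumes p0S: "\<forall>k>S. p0 k = 0" and n: "n \<ge> 1" and K: "K > 0"
  defines "A \<equiv> {w\<in>space M. real n * sq_error n w \<le> K^2 \<and> (\<forall>i\<in>{1..n}. X i w \<le> S)}"
  shows "A \<in> sets M" "1 - 1 / K^2 \<le> measure M A"
proof -
  show A: "A \<in> sets M" unfolding A_def by measurable
  have "AE w in M. (w \<in> A) = (w \<in> {w\<in>space M. real n * sq_error n w \<le> K^2})"
    using sample_in_support[OF p0S] by eventually_elim (auto simp: A_def)
  hence "measure M A = prob {w\<in>space M. real n * sq_error n w \<le> K^2}"
    using A by (intro measure_eq_AE) auto
  thus "1 - 1 / K^2 \<le> measure M A" using sq_error_tail[OF n K] by simp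
qed

lemma conv_lse_cdf_error_scaled:
  assumes p0C: "p0 \<in> convC" and p0S: "\<forall>k>S. p0 k = 0" "p0 S > 0"
    and n: "n \<ge> 1" "real n > (3 * K / p0 S)^2" and K: "K > 0"
    and nD: "real n * sq_error n w \<le> K^2" and sample: "\<forall>i\<in>{1..n}. X i w \<le> S"
  shows "\<bar>sqrt (real n) * sup_norm (\<lambda>k. Fcum (conv_lse (emp_pmf X n w)) k - Fcum p0 k)\<bar>
      \<le> (real S + 1) * K"
    and "\<bar>sqrt (real n) * sup_norm (\<lambda>z. Hcum (conv_lse (emp_pmf X n w)) z - Hcum p0 z)\<bar>
      \<le> (real S + 1)^2 * K"
proof -
  note bounds = conv_lse_cdf_error[OF emp_pmf_l2 p0C p0S(1) emp_pmf_support(2)[OF sample n(1)]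
      p0_cdf_one[OF p0S(1)] gap_for_large_n[OF n(2) p0S(2) nD sq_error_nonneg K, unfolded sq_error_def]]
  show "\<bar>sqrt (real n) * sup_norm (\<lambda>k. Fcum (conv_lse (emp_pmf X n w)) k - Fcum p0 k)\<bar>
      \<le> (real S + 1) * K"
    using bounds(1) nD sq_error_nonneg K unfolding sq_error_def by (intro scaled_sup_norm_bound) auto
  show "\<bar>sqrt (real n) * sup_norm (\<lambda>z. Hcum (conv_lse (emp_pmf X n w)) z - Hcum p0 z)\<bar>
      \<le> (real S + 1)^2 * K"
    using bounds(2) nD sq_error_nonneg K unfolding sq_error_def by (intro scaled_sup_norm_bound) auto
qed

lemma conv_lse_cdf_error_bounded:
  assumes p0C: "p0 \<in> convC" and p0S: "\<forall>k>S. p0 k = 0" "p0 S > 0"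
  shows "bounded_in_prob M (\<lambda>n w. sqrt (real n) *
            sup_norm (\<lambda>k. Fcum (conv_lse (emp_pmf X n w)) k - Fcum p0 k))"
    and "bounded_in_prob M (\<lambda>n w. sqrt (real n) *
            sup_norm (\<lambda>z. Hcum (conv_lse (emp_pmf X n w)) z - Hcum p0 z))"
proof -
  have good: "\<exists>N. \<forall>n\<ge>N. \<exists>A\<in>sets M. A \<subseteq> space M \<and> 1 - 1 / K^2 \<le> measure M A \<and> (\<forall>w\<in>A. P n w)"
    if K: "K > 0" and P: "\<And>n w. n \<ge> 1 \<Longrightarrow> real n > (3 * K / p0 S)^2 \<Longrightarrow>
      real n * sq_error n w \<le> K^2 \<Longrightarrow> \<forall>i\<in>{1..n}. X i w \<le> S \<Longrightarrow> P n w" for K P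
  proof (intro exI[of _ "nat \<lceil>(3 * K / p0 S)^2\<rceil> + 1"] allI impI)
    fix n assume "nat \<lceil>(3 * K / p0 S)^2\<rceil> + 1 \<le> n"
    hence n: "n \<ge> 1" "real n > (3 * K / p0 S)^2" by linarith+
    note event = sample_in_support_event[OF p0S(1) n(1) K]
    show "\<exists>A\<in>sets M. A \<subseteq> space M \<and> 1 - 1 / K^2 \<le> measure M A \<and> (\<forall>w\<in>A. P n w)"
      using event P[OF n] by (intro bexI[OF _ event(1)]) auto
  qed
  note scaled = conv_lse_cdf_error_scaled[OF p0C p0S]
  show "bounded_in_prob M (\<lambda>n w. sqrt (real n) *
            sup_norm (\<lambda>k. Fcum (conv_lse (emp_pmf X n w)) k - Fcum p0 k))"
    by (intro bounded_in_probI[where C="real S + 1"] good scaled(1))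
  show "bounded_in_prob M (\<lambda>n w. sqrt (real n) *
            sup_norm (\<lambda>z. Hcum (conv_lse (emp_pmf X n w)) z - Hcum p0 z))"
    by (intro bounded_in_probI[where C="(real S + 1)^2"] good scaled(2))
qed

end

theorem theorem1:
  fixes M :: "'a measure" and X :: "nat \<Rightarrow> 'a \<Rightarrow> nat" and p0 :: "nat \<Rightarrow> real"
  assumes "prob_space M"
    and p0_nonneg: "\<And>j. p0 j \<ge> 0"
    and p0_sum: "p0 sums 1"
    and p0_convex: "convex_seq p0"
    and p0_support: "{j. p0 j \<noteq> 0} = UNIV \<or> (\<exists>S::nat. S \<ge> 1 \<and> {j. p0 j \<noteq> 0} = {0..S})"
    and X_meas: "\<And>i. X i \<in> measurable M (count_space UNIV)"
    and X_indep: "prob_space.indep_vars M (\<lambda>_. count_space UNIV) X UNIV"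
    and X_dist: "\<And>i j. measure M {w\<in>space M. X i w = j} = p0 j"
  shows "bounded_in_prob M (\<lambda>n w. sqrt (real n) *
            sup_norm (\<lambda>k. conv_lse (emp_pmf X n w) k - p0 k))
    \<and> (finite {j. p0 j \<noteq> 0} \<longrightarrow>
        bounded_in_prob M (\<lambda>n w. sqrt (real n) *
            sup_norm (\<lambda>k. Fcum (conv_lse (emp_pmf X n w)) k - Fcum p0 k))
      \<and> bounded_in_prob M (\<lambda>n w. sqrt (real n) *
            sup_norm (\<lambda>z. Hcum (conv_lse (emp_pmf X n w)) z - Hcum p0 z)))"
proof -
  interpret iid_sample M X p0
    using assms by (simp add: iid_sample_def iid_sample_axioms_def)
  have p0C: "p0 \<in> convC" using p0_convex p0_l2 by (simp add: convC_iff)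
  have "bounded_in_prob M (\<lambda>n w. sqrt (real n) *
            sup_norm (\<lambda>k. Fcum (conv_lse (emp_pmf X n w)) k - Fcum p0 k))
      \<and> bounded_in_prob M (\<lambda>n w. sqrt (real n) *
            sup_norm (\<lambda>z. Hcum (conv_lse (emp_pmf X n w)) z - Hcum p0 z))"
    if "finite {j. p0 j \<noteq> 0}"
  proof -
    have "{j. p0 j \<noteq> 0} \<noteq> UNIV" using that by auto
    then obtain S where S: "{j. p0 j \<noteq> 0} = {0..S}" using p0_support by auto
    hence supp: "p0 k \<noteq> 0 \<longleftrightarrow> k \<le> S" for k by (auto simp: set_eq_iff)
    have "\<forall>k>S. p0 k = 0" using supp by (meson not_le)
    moreover have "p0 S > 0" using supp[of S] p0_nonneg[of S] by linarith
    ultimately show ?thesis using conv_lse_cdf_error_bounded[OF p0C] by blast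
  qed
  thus ?thesis using conv_lse_sup_error_bounded[OF p0C] by blast
qed

end
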